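(* Let $y_0\in\mathbb{R}$, $b>0$, $\epsilon>0$, and let $f:[y_0,\infty)\to\mathbb{R}$ be such that $p:=1/f$ is well defined and twice differentiable on $[y_0,\infty)$, with $f(y_0)>0$, $f'(y)>0$ and $p''(y)>0$ for all $y\ge y_0$. Assume $b<\int_{y_0}^{\infty}p(y)\,dy$ (possibly $+\infty$), so that the solution $y(x)$ of $y'=f(y)$, $y(0)=y_0$, exists on $[0,b]$; equivalently $y(x)$ is defined by $\int_{y_0}^{y(x)}p(y)\,dy=x$. For $h>0$ and integers $N\ge0$ let $\Sigma_{l,h,N}=\sum_{i=1}^{N}h\,p(y_0+hi)$. Let $0<x_1<x_2<\dots<x_N=b$ be a mesh. Let $n_2^{(1)}$ be the smallest positive integer $n$ with $\Sigma_{l,\epsilon,n}\ge b$ (assumed to exist), and let $j$ be a positive integer satisfying $$j\ge 1+\frac12\cdot\frac{p(y_0)-p(y_0+\epsilon n_2^{(1)}-\epsilon)}{p(y_0+\epsilon n_2^{(1)})}\qquad\text{or}\qquad j\ge\frac12\Big(1+\frac{p(y_0)}{p(y_0+\epsilon n_2^{(1)})}\Big).$$ Put $h^{(j)}=\epsilon/j$, and for each $k$ with $1\le k\le N$ let $n_{2,k}^{(j)}$ be the smallest positive integer $n$ with $\Sigma_{l,h^{(j)},n}\ge x_k$, and $y_{x_k}:=y_0+h^{(j)}n_{2,k}^{(j)}$. Then $$|y(x_k)-y_{x_k}|<\epsilon\quad\text{for all }k,\ 1\le k\le N.$$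
   Context: $\Sigma_{l,h,N}$ is the lower rectangular (right-endpoint) sum with step $h$ for $\int_{y_0}^{y_0+hN}p(y)\,dy$; the empty sum is $0$. *)

theory Defs
  imports "HOL-Analysis.Analysis"
begin

definition Sigma_l :: "(real \<Rightarrow> real) \<Rightarrow> real \<Rightarrow> real \<Rightarrow> nat \<Rightarrow> real" where
  "Sigma_l p y0 h N = (\<Sum>i=1..N. h * p (y0 + h * real i))"

end

theory Submission
  imports Defs
begin

text \<open>
  Let \<open>P u\<close> be the integral of \<open>p\<close> over \<open>[y0, u]\<close>, so that the exact solution is
  characterised by \<open>P (y x) = x\<close>. Since \<open>p = 1/f\<close> is positive, decreasing and convex, the
  integral of \<open>p\<close> over a step \<open>[a, a + h]\<close> lies between the right-endpoint rectangle
  \<open>h p (a + h)\<close> and the trapezoid \<open>h (p a + p (a + h)) / 2\<close>; summing, \<open>P (y0 + h n)\<close> lies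
  between \<open>Sigma_l p y0 h n\<close> and that sum plus \<open>h/2 (p y0 - p (y0 + h n))\<close>.
  For the least \<open>n\<close> whose sum reaches \<open>x\<close> the lower estimate gives \<open>y x \<le> y0 + h n\<close>. For the
  other side, the trapezoid error over the first \<open>n - j\<close> steps is at most the \<open>j - 1\<close>
  rectangles that follow them -- this is what the condition on \<open>j\<close> guarantees -- so
  \<open>P (y0 + h (n - j))\<close> is below the sum up to \<open>n - 1\<close>, hence below \<open>x\<close>, and
  \<open>y x > y0 + h n - \<epsilon>\<close>. Refining the step from \<open>\<epsilon>\<close> to \<open>\<epsilon>/j\<close> only increases the sums, so
  \<open>n \<le> j n\<^sub>1\<close>, which keeps all nodes involved in the range where the condition on \<open>j\<close> applies.
\<close>

lemma Sigma_l_0 [simp]: "Sigma_l p y0 h 0 = 0"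
  by (simp add: Sigma_l_def)

lemma Sigma_l_Suc: "Sigma_l p y0 h (Suc n) = Sigma_l p y0 h n + h * p (y0 + h * real (Suc n))"
  by (simp add: Sigma_l_def)

lemma Sigma_l_add:
  "Sigma_l p y0 h (n + d) = Sigma_l p y0 h n + (\<Sum>r=1..d. h * p (y0 + h * real (n + r)))"
  by (induction d) (simp_all add: Sigma_l_Suc add_ac)

lemma Sigma_l_add_ge:
  assumes "0 \<le> h" and "antimono_on {y0..} p"
  shows "Sigma_l p y0 h n + real d * (h * p (y0 + h * real (n + d))) \<le> Sigma_l p y0 h (n + d)"
proof -
  have "h * p (y0 + h * real (n + d)) \<le> h * p (y0 + h * real (n + r))" if "r \<in> {1..d}" for r
    using assms that by (intro mult_left_mono monotone_onD[OF assms(2)]) (auto intro: mult_left_mono)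
  then have "real (card {1..d}) * (h * p (y0 + h * real (n + d)))
      \<le> (\<Sum>r=1..d. h * p (y0 + h * real (n + r)))"
    by (rule sum_bounded_below)
  then show ?thesis
    by (simp add: Sigma_l_add)
qed

lemma Sigma_l_le_Sigma_l_refined:
  assumes "0 \<le> \<epsilon>" and "0 < j" and "antimono_on {y0..} p"
  shows "Sigma_l p y0 \<epsilon> n \<le> Sigma_l p y0 (\<epsilon> / real j) (j * n)"
proof (induction n)
  case (Suc n)
  let ?h = "\<epsilon> / real j"
  have "Sigma_l p y0 ?h (j * n) + real j * (?h * p (y0 + ?h * real (j * n + j)))
      \<le> Sigma_l p y0 ?h (j * n + j)"
    using assms by (intro Sigma_l_add_ge) auto
  moreover have "real j * (?h * q) = \<epsilon> * q" for q
    using assms(2) by simp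
  moreover have "?h * real (j * n + j) = \<epsilon> * real (Suc n)"
    using assms(2) by (simp add: field_simps)
  ultimately have "Sigma_l p y0 ?h (j * n) + \<epsilon> * p (y0 + \<epsilon> * real (Suc n))
      \<le> Sigma_l p y0 ?h (j * Suc n)"
    by (simp add: add.commute)
  with Suc show ?case
    by (simp add: Sigma_l_Suc)
qed simp

lemma Least_Sigma_l_ge:
  fixes x h y0 :: real and p :: "real \<Rightarrow> real" and n :: nat
  defines "N \<equiv> LEAST n. 0 < n \<and> x \<le> Sigma_l p y0 h n"
  assumes "0 < n" and "x \<le> Sigma_l p y0 h n" and "0 < x"
  shows "0 < N" and "N \<le> n" and "x \<le> Sigma_l p y0 h N" and "Sigma_l p y0 h (N - 1) < x"
proof -
  show N: "0 < N" "x \<le> Sigma_l p y0 h N"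
    using LeastI[of "\<lambda>n. 0 < n \<and> x \<le> Sigma_l p y0 h n", OF conjI[OF assms(2,3)]]
    by (simp_all add: N_def)
  show "N \<le> n"
    unfolding N_def using assms(2,3) by (intro Least_le) simp
  show "Sigma_l p y0 h (N - 1) < x"
  proof (cases "N = 1")
    case False
    then have "\<not> (0 < N - 1 \<and> x \<le> Sigma_l p y0 h (N - 1))"
      using N not_less_Least[of "N - 1" "\<lambda>n. 0 < n \<and> x \<le> Sigma_l p y0 h n"]
      unfolding N_def by simp
    with False N show ?thesis by auto
  qed (use assms(4) in simp)
qed

lemma DERIV_within_nonneg_imp_le:
  fixes g g' :: "real \<Rightarrow> real"
  assumes "a \<le> b"
    and "\<And>t. t \<in> {a..b} \<Longrightarrow> (g has_real_derivative g' t) (at t within {a..b})"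
    and "\<And>t. t \<in> {a..b} \<Longrightarrow> 0 \<le> g' t"
  shows "g a \<le> g b"
proof (rule DERIV_nonneg_imp_increasing_open[OF assms(1)])
  fix t assume "a < t" "t < b"
  with assms(2,3)[of t] show "\<exists>d. (g has_real_derivative d) (at t) \<and> 0 \<le> d"
    using at_within_interior[of t "{a..b}"] by auto
next
  show "continuous_on {a..b} g"
    using assms(2) by (rule DERIV_continuous_on)
qed

lemma integral_ge_right_endpoint:
  fixes p :: "real \<Rightarrow> real"
  assumes "a \<le> c" and "continuous_on {a..c} p" and "antimono_on {a..c} p"
  shows "(c - a) * p c \<le> integral {a..c} p"
proof -
  have "integral {a..c} (\<lambda>_. p c) \<le> integral {a..c} p"
    using assms by (intro integral_le integrable_continuous_interval monotone_onD[OF assms(3)]) auto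
  then show ?thesis
    using assms(1) by simp
qed

lemma tangent_le_of_mono_derivative:
  fixes p p' :: "real \<Rightarrow> real"
  assumes "a \<le> c"
    and "\<And>t. t \<in> {a..c} \<Longrightarrow> (p has_real_derivative p' t) (at t within {a..c})"
    and "mono_on {a..c} p'"
  shows "p c - (c - a) * p' c \<le> p a"
proof -
  have "(\<lambda>t. t * p' c - p t) a \<le> (\<lambda>t. t * p' c - p t) c"
  proof (rule DERIV_within_nonneg_imp_le[OF assms(1)])
    fix t assume "t \<in> {a..c}"
    then show "((\<lambda>t. t * p' c - p t) has_real_derivative p' c - p' t) (at t within {a..c})"
      using assms(2)[of t] by (auto intro!: derivative_eq_intros)
    show "0 \<le> p' c - p' t"
      using \<open>t \<in> {a..c}\<close> mono_onD[OF assms(3)] by auto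
  qed
  then show ?thesis
    by (simp add: algebra_simps)
qed

lemma integral_le_trapezoid:
  fixes p p' :: "real \<Rightarrow> real"
  assumes "a \<le> c"
    and deriv: "\<And>t. t \<in> {a..c} \<Longrightarrow> (p has_real_derivative p' t) (at t within {a..c})"
    and "mono_on {a..c} p'"
  shows "integral {a..c} p \<le> (c - a) * (p a + p c) / 2"
proof -
  have cont: "continuous_on {a..c} p"
    using deriv by (rule DERIV_continuous_on)
  let ?Q = "\<lambda>t. (t - a) * (p a + p t) / 2 - integral {a..t} p"
  have "?Q a \<le> ?Q c"
  proof (rule DERIV_within_nonneg_imp_le[OF assms(1)])
    fix t assume t: "t \<in> {a..c}"
    show "(?Q has_real_derivative (p a + p t) / 2 + (t - a) * p' t / 2 - p t) (at t within {a..c})"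
      using deriv[OF t] integral_has_real_derivative[OF cont t]
      by (auto intro!: derivative_eq_intros simp: field_simps)
    have "p t - (t - a) * p' t \<le> p a"
      using t assms(3) by (intro tangent_le_of_mono_derivative)
        (auto intro: has_field_derivative_subset[OF deriv] monotone_on_subset)
    then show "0 \<le> (p a + p t) / 2 + (t - a) * p' t / 2 - p t"
      by (simp add: field_simps)
  qed
  then show ?thesis
    by simp
qed

lemma mono_on_atLeast_if_deriv_nonneg:
  fixes g g' :: "real \<Rightarrow> real"
  assumes "\<And>t. a \<le> t \<Longrightarrow> (g has_real_derivative g' t) (at t within {a..})"
    and "\<And>t. a \<le> t \<Longrightarrow> 0 \<le> g' t"
  shows "mono_on {a..} g"
proof (rule mono_onI)
  fix r s assume "r \<in> {a..}" "s \<in> {a..}" "r \<le> s"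
  then show "g r \<le> g s"
    using assms by (intro DERIV_within_nonneg_imp_le[of r s g g'])
      (auto intro: has_field_derivative_subset[where s="{a..}"])
qed

lemma integral_along_autonomous_solution:
  fixes y f p :: "real \<Rightarrow> real"
  assumes s: "s \<in> {0..b}"
    and ode: "\<And>t. t \<in> {0..b} \<Longrightarrow> (y has_real_derivative f (y t)) (at t within {0..b})"
    and speed: "\<And>t. t \<in> {0..b} \<Longrightarrow> 0 \<le> f (y t)"
    and reciprocal: "\<And>t. t \<in> {0..b} \<Longrightarrow> p (y t) * f (y t) = 1"
    and "continuous_on {y 0..y s} p"
  shows "integral {y 0..y s} p = s"
proof -
  have ode_s: "(y has_real_derivative f (y t)) (at t within {0..s})" if "t \<in> {0..s}" for t
    using s that ode[of t] by (auto intro: has_field_derivative_subset)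
  have y_mono: "y t \<le> y t'" if "0 \<le> t" "t \<le> t'" "t' \<le> s" for t t'
    using that s ode_s speed
    by (intro DERIV_within_nonneg_imp_le[of t t' y "\<lambda>t. f (y t)"])
      (auto intro: has_field_derivative_subset[OF ode_s])
  have "((\<lambda>t. f (y t) *\<^sub>R p (y t)) has_integral integral {y 0..y s} p) {0..s}"
    using assms(5) ode_s y_mono s by (intro has_integral_substitution) auto
  then have "((\<lambda>_. 1) has_integral integral {y 0..y s} p) {0..s}"
    using s reciprocal by (subst has_integral_cong) (auto simp: mult.commute)
  then show ?thesis
    using s by (simp add: has_integral_iff)
qed

lemma mesh_bounds:
  fixes x :: "nat \<Rightarrow> 'a::order"
  assumes mono: "\<And>k. k \<in> {1..<M} \<Longrightarrow> x k < x (Suc k)" and k: "k \<in> {1..M}"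
  shows "x 1 \<le> x k" and "x k \<le> x M"
proof -
  from k have "1 \<le> k" "k \<le> M" by simp_all
  show "x 1 \<le> x k"
    using \<open>1 \<le> k\<close>
  proof (induction k rule: dec_induct)
    case (step n)
    then show ?case
      using mono[of n] \<open>k \<le> M\<close> by fastforce
  qed simp
  show "x k \<le> x M"
    using \<open>k \<le> M\<close>
  proof (induction k rule: inc_induct)
    case (step n)
    then show ?case
      using mono[of n] \<open>1 \<le> k\<close> by fastforce
  qed simp
qed

locale decreasing_convex_density =
  fixes y0 :: real and p p' :: "real \<Rightarrow> real"
  assumes p_deriv: "\<And>t. y0 \<le> t \<Longrightarrow> (p has_real_derivative p' t) (at t within {y0..})"
    and p'_mono: "mono_on {y0..} p'"
    and p_antimono: "antimono_on {y0..} p"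
    and p_pos: "\<And>t. y0 \<le> t \<Longrightarrow> 0 < p t"
begin

lemma continuous_on_p: "continuous_on {y0..} p"
  using p_deriv by (intro DERIV_continuous_on) auto

lemma integral_split:
  assumes "y0 \<le> a" and "a \<le> c"
  shows "integral {y0..c} p = integral {y0..a} p + integral {a..c} p"
  using assms continuous_on_subset[OF continuous_on_p]
  by (intro Henstock_Kurzweil_Integration.integral_combine[symmetric] integrable_continuous_interval) auto

lemma integral_ge_step:
  assumes "y0 \<le> a" and "a \<le> c"
  shows "(c - a) * p c \<le> integral {a..c} p"
  using assms continuous_on_subset[OF continuous_on_p] monotone_on_subset[OF p_antimono]
  by (intro integral_ge_right_endpoint) auto

lemma integral_le_trapezoid_step:
  assumes "y0 \<le> a" and "a \<le> c"
  shows "integral {a..c} p \<le> (c - a) * (p a + p c) / 2"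
  using assms p_deriv monotone_on_subset[OF p'_mono]
  by (intro integral_le_trapezoid[of a c p p'])
    (auto intro: has_field_derivative_subset[where s="{y0..}"])

lemma integral_strict_mono:
  assumes "y0 \<le> a" and "a < c"
  shows "integral {y0..a} p < integral {y0..c} p"
proof -
  have "0 < (c - a) * p c"
    using assms p_pos[of c] by simp
  then show ?thesis
    using assms integral_ge_step[of a c] integral_split[of a c] by simp
qed

lemma integral_less_iff:
  assumes "y0 \<le> a" and "y0 \<le> c"
  shows "integral {y0..a} p < integral {y0..c} p \<longleftrightarrow> a < c"
  using assms integral_strict_mono[of a c] integral_strict_mono[of c a]
  by (cases a c rule: linorder_cases) auto

lemma Sigma_l_le_integral:
  assumes "0 \<le> h"
  shows "Sigma_l p y0 h n \<le> integral {y0..y0 + h * real n} p"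
proof (induction n)
  case (Suc n)
  let ?a = "y0 + h * real n" and ?c = "y0 + h * real (Suc n)"
  have "?c - ?a = h" "y0 \<le> ?a" "?a \<le> ?c"
    using assms by (simp_all add: algebra_simps)
  then show ?case
    using Suc integral_ge_step[of ?a ?c] integral_split[of ?a ?c] by (simp add: Sigma_l_Suc)
qed simp

lemma integral_le_Sigma_l_trapezoid:
  assumes "0 \<le> h"
  shows "integral {y0..y0 + h * real n} p \<le> Sigma_l p y0 h n + h / 2 * (p y0 - p (y0 + h * real n))"
proof (induction n)
  case (Suc n)
  let ?a = "y0 + h * real n" and ?c = "y0 + h * real (Suc n)"
  have "?c - ?a = h" "y0 \<le> ?a" "?a \<le> ?c"
    using assms by (simp_all add: algebra_simps)
  then show ?case
    using Suc integral_le_trapezoid_step[of ?a ?c] integral_split[of ?a ?c]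
    by (simp add: Sigma_l_Suc algebra_simps)
qed simp

lemma crossing_node_error:
  fixes h x Y :: real and j n :: nat
  assumes h: "0 < h" and j: "0 < j"
    and Y: "y0 \<le> Y" "integral {y0..Y} p = x"
    and n: "x \<le> Sigma_l p y0 h n" "Sigma_l p y0 h (n - 1) < x"
    and error: "j \<le> n \<Longrightarrow>
      p y0 - p (y0 + h * real (n - j)) \<le> 2 * (real j - 1) * p (y0 + h * real (n - 1))"
  shows "Y \<le> y0 + h * real n" and "y0 + h * real n - h * real j < Y"
proof -
  have "x \<le> integral {y0..y0 + h * real n} p"
    using n(1) Sigma_l_le_integral[of h n] h by simp
  then show "Y \<le> y0 + h * real n"
    using Y h integral_less_iff[of "y0 + h * real n" Y] by simp
  show "y0 + h * real n - h * real j < Y"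
  proof (cases "j \<le> n")
    case False
    then have "h * real n < h * real j"
      using h by simp
    then show ?thesis
      using Y(1) by simp
  next
    case True
    define m where "m = n - j"
    have n_split: "m + (j - 1) = n - 1" "h * real m = h * real n - h * real j"
      using True j by (simp_all add: m_def of_nat_diff algebra_simps)
    have "integral {y0..y0 + h * real m} p \<le> Sigma_l p y0 h m + h / 2 * (p y0 - p (y0 + h * real m))"
      using h by (intro integral_le_Sigma_l_trapezoid) simp
    also have "\<dots> \<le> Sigma_l p y0 h m + real (j - 1) * (h * p (y0 + h * real (n - 1)))"
    proof -
      have "h / 2 * (p y0 - p (y0 + h * real m))
          \<le> h / 2 * (2 * (real j - 1) * p (y0 + h * real (n - 1)))"
        using mult_left_mono[OF error[OF True], of "h / 2"] h by (simp add: m_def)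
      then show ?thesis
        using j by (simp add: of_nat_diff algebra_simps)
    qed
    also have "\<dots> \<le> Sigma_l p y0 h (n - 1)"
      using Sigma_l_add_ge[OF _ p_antimono, of h m "j - 1"] h unfolding n_split(1) by simp
    also have "\<dots> < integral {y0..Y} p"
      using n(2) Y(2) by simp
    finally have "y0 + h * real m < Y"
      using h Y(1) integral_less_iff by simp
    then show ?thesis
      using n_split(2) by simp
  qed
qed

lemma refinement_error_bound:
  fixes \<epsilon> :: real and j n n1 :: nat
  assumes "0 < \<epsilon>" and "0 < j" and "0 < n1" and "j \<le> n" and "n \<le> j * n1"
    and j_bound: "real j \<ge> 1 + (1/2) * (p y0 - p (y0 + \<epsilon> * real n1 - \<epsilon>)) / p (y0 + \<epsilon> * real n1)
       \<or> real j \<ge> (1/2) * (1 + p y0 / p (y0 + \<epsilon> * real n1))"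
  shows "p y0 - p (y0 + \<epsilon> / real j * real (n - j))
    \<le> 2 * (real j - 1) * p (y0 + \<epsilon> / real j * real (n - 1))"
proof -
  let ?q = "p (y0 + \<epsilon> * real n1)" and ?r = "p (y0 + \<epsilon> * real n1 - \<epsilon>)"
  have "\<epsilon> \<le> \<epsilon> * real n1"
    using assms(1,3) by simp
  then have q_le_r: "?q \<le> ?r"
    using assms(1) by (intro monotone_onD[OF p_antimono]) auto
  have q_pos: "0 < ?q"
    using assms(1) p_pos by simp
  have "p y0 - ?r \<le> 2 * (real j - 1) * ?q"
    using j_bound
  proof
    assume "real j \<ge> 1 + (1/2) * (p y0 - ?r) / ?q"
    then show ?thesis
      using q_pos by (simp add: field_simps)
  next
    assume "real j \<ge> (1/2) * (1 + p y0 / ?q)"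
    then show ?thesis
      using q_pos q_le_r by (simp add: field_simps)
  qed
  have "\<epsilon> / real j * real n \<le> \<epsilon> / real j * (real j * real n1)"
    using assms(1,5) by (intro mult_left_mono) (simp_all flip: of_nat_mult)
  then have node_le: "\<epsilon> / real j * real n \<le> \<epsilon> * real n1"
    using assms(2) by simp
  have "\<epsilon> / real j * real (n - j) \<le> \<epsilon> * real n1 - \<epsilon>"
    using assms(2,4) node_le by (simp add: of_nat_diff field_simps)
  then have "?r \<le> p (y0 + \<epsilon> / real j * real (n - j))"
    using assms(1) \<open>\<epsilon> \<le> \<epsilon> * real n1\<close> by (intro monotone_onD[OF p_antimono]) auto
  moreover have "\<epsilon> / real j * real (n - 1) \<le> \<epsilon> * real n1"
    using node_le order_trans[OF mult_left_mono[of "real (n - 1)" "real n" "\<epsilon> / real j"]] assms(1)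
    by simp
  then have "2 * (real j - 1) * ?q \<le> 2 * (real j - 1) * p (y0 + \<epsilon> / real j * real (n - 1))"
    using assms(1,2) by (intro mult_left_mono monotone_onD[OF p_antimono]) auto
  ultimately show ?thesis
    using \<open>p y0 - ?r \<le> 2 * (real j - 1) * ?q\<close> by linarith
qed

end

lemma decreasing_convex_density_inverse:
  fixes f f' p' p'' :: "real \<Rightarrow> real"
  assumes "0 < f y0"
    and f_deriv: "\<And>t. y0 \<le> t \<Longrightarrow> (f has_real_derivative f' t) (at t within {y0..})"
    and "\<And>t. y0 \<le> t \<Longrightarrow> 0 \<le> f' t"
    and "\<And>t. y0 \<le> t \<Longrightarrow> ((\<lambda>t. 1 / f t) has_real_derivative p' t) (at t within {y0..})"
    and "\<And>t. y0 \<le> t \<Longrightarrow> (p' has_real_derivative p'' t) (at t within {y0..})"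
    and "\<And>t. y0 \<le> t \<Longrightarrow> 0 \<le> p'' t"
  shows "decreasing_convex_density y0 (\<lambda>t. 1 / f t) p'"
proof -
  have f_mono: "mono_on {y0..} f"
    using assms(2,3) by (rule mono_on_atLeast_if_deriv_nonneg)
  then have f_pos: "0 < f t" if "y0 \<le> t" for t
    using assms(1) mono_onD[of _ f y0 t] that by fastforce
  show ?thesis
  proof
    show "antimono_on {y0..} (\<lambda>t. 1 / f t)"
      using f_pos mono_onD[OF f_mono] by (auto simp: monotone_on_def intro: frac_le)
    show "mono_on {y0..} p'"
      using assms(5,6) by (rule mono_on_atLeast_if_deriv_nonneg)
  qed (use assms(4) f_pos in auto)
qed

theorem theorem3:
  fixes y0 b \<epsilon> :: real
    and f f' p p' p'' :: "real \<Rightarrow> real"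
    and y :: "real \<Rightarrow> real"
    and M :: nat and x :: "nat \<Rightarrow> real"
    and j :: nat
  assumes b_pos: "b > 0" and eps_pos: "\<epsilon> > 0"
    and p_def: "p = (\<lambda>t. 1 / f t)"
    and f_nz: "\<forall>t\<ge>y0. f t \<noteq> 0"
    and f_y0: "f y0 > 0"
    and f_deriv: "\<forall>t\<ge>y0. (f has_real_derivative f' t) (at t within {y0..}) \<and> f' t > 0"
    and p_deriv: "\<forall>t\<ge>y0. (p has_real_derivative p' t) (at t within {y0..})"
    and p'_deriv: "\<forall>t\<ge>y0. (p' has_real_derivative p'' t) (at t within {y0..})"
    and p''_pos: "\<forall>t\<ge>y0. p'' t > 0"
    and b_lt_int: "ennreal b < (\<integral>\<^sup>+ t. indicator {y0..} t * ennreal (p t) \<partial>lborel)"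
    and y_init: "y 0 = y0"
    and y_dom: "\<forall>s\<in>{0..b}. y s \<ge> y0"
    and y_ode: "\<forall>s\<in>{0..b}. (y has_real_derivative f (y s)) (at s within {0..b})"
    and M_pos: "M \<ge> 1"
    and mesh_first: "0 < x 1"
    and mesh_mono: "\<forall>k\<in>{1..<M}. x k < x (Suc k)"
    and mesh_last: "x M = b"
    and n1_ex: "\<exists>n>0. Sigma_l p y0 \<epsilon> n \<ge> b"
    and j_pos: "j > 0"
    and j_bound:
      "(let n1 = (LEAST n. n > 0 \<and> Sigma_l p y0 \<epsilon> n \<ge> b) in
         real j \<ge> 1 + (1/2) * (p y0 - p (y0 + \<epsilon> * real n1 - \<epsilon>)) / p (y0 + \<epsilon> * real n1)
         \<or> real j \<ge> (1/2) * (1 + p y0 / p (y0 + \<epsilon> * real n1)))"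
  shows "\<forall>k\<in>{1..M}.
           \<bar>y (x k) - (y0 + (\<epsilon> / real j) *
              real (LEAST n. n > 0 \<and> Sigma_l p y0 (\<epsilon> / real j) n \<ge> x k))\<bar> < \<epsilon>"
proof -
  have "decreasing_convex_density y0 p p'"
    unfolding p_def using f_y0 f_deriv p_deriv[unfolded p_def] p'_deriv p''_pos
    by (intro decreasing_convex_density_inverse[of f y0 f' p' p'']) (auto intro: less_imp_le)
  then interpret decreasing_convex_density y0 p p' .
  define n1 where "n1 = (LEAST n. 0 < n \<and> b \<le> Sigma_l p y0 \<epsilon> n)"
  obtain n0 where "0 < n0" "b \<le> Sigma_l p y0 \<epsilon> n0"
    using n1_ex by blast
  then have n1: "0 < n1" "b \<le> Sigma_l p y0 \<epsilon> n1"
    using Least_Sigma_l_ge[of n0 b p y0 \<epsilon>] b_pos unfolding n1_def by auto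
  show ?thesis
  proof
    fix k assume "k \<in> {1..M}"
    then have xk: "0 < x k" "x k \<le> b"
      using mesh_bounds[of M x k] mesh_mono mesh_first mesh_last by force+
    have "integral {y 0..y (x k)} p = x k"
    proof (rule integral_along_autonomous_solution[where f = f])
      fix t assume t: "t \<in> {0..b}"
      show "(y has_real_derivative f (y t)) (at t within {0..b})"
        using y_ode t by simp
      have "0 < f (y t)"
        using p_pos[of "y t"] y_dom t p_def by simp
      then show "0 \<le> f (y t)" and "p (y t) * f (y t) = 1"
        using p_def by simp_all
    qed (use xk y_dom y_init continuous_on_subset[OF continuous_on_p] in auto)
    then have y_xk: "y0 \<le> y (x k)" "integral {y0..y (x k)} p = x k"
      using y_dom xk y_init by auto
    have "x k \<le> Sigma_l p y0 (\<epsilon> / real j) (j * n1)"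
      using Sigma_l_le_Sigma_l_refined[OF _ j_pos p_antimono, of \<epsilon> n1] eps_pos n1 xk by simp
    note N = Least_Sigma_l_ge[OF _ this xk(1)]
    show "\<bar>y (x k) - (y0 + \<epsilon> / real j *
        real (LEAST n. 0 < n \<and> x k \<le> Sigma_l p y0 (\<epsilon> / real j) n))\<bar> < \<epsilon>"
      using crossing_node_error[OF _ j_pos y_xk N(3,4)
          refinement_error_bound[OF eps_pos j_pos n1(1) _ N(2)]] j_bound n1 j_pos eps_pos unfolding Let_def n1_def[symmetric] by (simp add: abs_less_iff)
  qed
qed

end
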